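(* Let $K \ge 2$, $n \ge 1$, $\Sigma = \{1,\ldots,K\}^n$, and let $\Pr(\cdot \mid A)$ be a probability distribution on $\Sigma$ (the posterior of the labels given data $A$), invariant under relabelling, i.e. $\Pr(\phi(\sigma)\mid A) = \Pr(\sigma \mid A)$ for every permutation $\phi$ of $\{1,\ldots,K\}$, where $(\phi(\sigma))_i = \phi(\sigma_i)$. Let $\rho:\Sigma\to\Sigma$ be the canonical remapping and $\Pr^*(\cdot\mid A)$ the induced posterior on $\Sigma^* = \{\sigma \in \Sigma : \rho(\sigma) = \sigma\}$, i.e. $\Pr^*(\sigma \mid A) = \sum_{\sigma' \in \Sigma:\, \rho(\sigma') = \sigma} \Pr(\sigma' \mid A)$. Define the remapped centroid estimator \[ \hat\sigma_C = \rho\Big( \operatorname*{arg\,min}_{\tilde\sigma \in \Sigma} \mathbb{E}_{\sigma \mid A}\big[ H(\tilde\sigma, \rho(\sigma)) \big] \Big), \qquad H(\tilde\sigma,\sigma) = \sum_{i=1}^n I(\tilde\sigma_i \ne \sigma_i), \] and let $\hat\sigma^* \in \Sigma$ be given by $(\hat\sigma^* )_i = \operatorname*{arg\,max}_{k \in \{1,\ldots,K\}} \Pr^*(\sigma_i = k \mid A)$ for $i = 1,\ldots,n$. Then $\hat\sigma^*$ minimizes $\tilde\sigma \mapsto \mathbb{E}_{\sigma\mid A}[H(\tilde\sigma,\rho(\sigma))]$ over $\Sigma$, and hence $\hat\sigma_C = \rho(\hat\sigma^* )$ (the centroid estimator is a mapped consensus estimator).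
   Context: Canonical remapping: for $\sigma \in \Sigma$, $\rho(\sigma)$ is obtained by relabelling the labels in order of first appearance along $\sigma_1,\sigma_2,\ldots,\sigma_n$: the label of $\sigma_1$ becomes $1$, the next new label encountered becomes $2$, and so on (e.g. $\sigma=(2,2,3,1,3,4,2,1)$ maps to $(1,1,2,3,2,4,1,3)$). Formally, with $\mathrm{ind}(\sigma)_k = \min\{i:\sigma_i = k\}$ and $\mathrm{ord}(\sigma)_k = \sigma\big[\mathrm{ind}(\sigma)_{(k)}\big]$ (the $k$-th label to appear), $\rho(\sigma) = \mathrm{ord}(\sigma)^{-1}(\sigma)$. $\Pr^*(\sigma_i = k \mid A)$ denotes the marginal probability under $\Pr^*$. $I(\cdot)$ is the indicator function. *)

theory Defs
  imports Complex_Main "HOL-Combinatorics.Permutations"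
begin

text \<open>Label vectors sigma in Sigma = {1..K}^n, represented as lists of length n
  (positions 0..n-1 correspond to 1..n in the paper).\<close>

definition Sigma :: "nat \<Rightarrow> nat \<Rightarrow> nat list set" where
  "Sigma K n = {s. length s = n \<and> set s \<subseteq> {1..K}}"

definition first_occ :: "nat list \<Rightarrow> nat \<Rightarrow> nat" where
  "first_occ s i = (LEAST j. s ! j = s ! i)"

text \<open>Canonical remapping rho: the label of s!i is replaced by its rank in the order
  of first appearance, i.e. 1 + the number of distinct labels appearing strictly before
  the first appearance of s!i.\<close>
definition canon :: "nat list \<Rightarrow> nat list" where
  "canon s = map (\<lambda>i. Suc (card {s ! j | j. j < first_occ s i})) [0..<length s]"

definition hamming :: "nat list \<Rightarrow> nat list \<Rightarrow> nat" where
  "hamming t s = card {i. i < length t \<and> t ! i \<noteq> s ! i}"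

definition exp_loss :: "nat \<Rightarrow> nat \<Rightarrow> (nat list \<Rightarrow> real) \<Rightarrow> nat list \<Rightarrow> real" where
  "exp_loss K n P t = (\<Sum>s\<in>Sigma K n. P s * real (hamming t (canon s)))"

definition post_star :: "nat \<Rightarrow> nat \<Rightarrow> (nat list \<Rightarrow> real) \<Rightarrow> nat list \<Rightarrow> real" where
  "post_star K n P s = (\<Sum>s'\<in>{s'\<in>Sigma K n. canon s' = s}. P s')"

definition marg_star :: "nat \<Rightarrow> nat \<Rightarrow> (nat list \<Rightarrow> real) \<Rightarrow> nat \<Rightarrow> nat \<Rightarrow> real" where
  "marg_star K n P i k = (\<Sum>s\<in>{s\<in>Sigma K n. canon s = s \<and> s ! i = k}. post_star K n P s)"

end

theory Submission
  imports Defs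
begin

text \<open>The Hamming loss decomposes over positions, so the expected loss of \<open>t\<close> is
  \<open>\<Sum>i<n. (1 - Pr(\<rho>(\<sigma>)\<^sub>i = t\<^sub>i))\<close>. Since \<open>\<rho>\<close> is idempotent, \<open>Pr(\<rho>(\<sigma>)\<^sub>i = k)\<close> is exactly the
  marginal \<open>Pr\<^sup>*(\<sigma>\<^sub>i = k)\<close>, and the sum is minimised coordinatewise by the maximiser of the
  marginals. Idempotence of \<open>\<rho>\<close> holds because \<open>\<rho>(\<sigma>)\<close> depends only on the equality pattern
  of \<open>\<sigma>\<close>, and \<open>\<rho>\<close> preserves that pattern.\<close>

lemma first_occ_le: "i < length s \<Longrightarrow> first_occ s i \<le> i"
  unfolding first_occ_def by (rule Least_le) simp

lemma nth_first_occ: "i < length s \<Longrightarrow> s ! first_occ s i = s ! i"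
  unfolding first_occ_def by (rule LeastI[of _ i]) simp

lemma nth_less_first_occ: "j < first_occ s i \<Longrightarrow> s ! j \<noteq> s ! i"
  unfolding first_occ_def using not_less_Least by blast

lemma nth_notin_image_first_occ: "s ! i \<notin> nth s ` {..<first_occ s i}"
  using nth_less_first_occ by fastforce

lemma first_occ_eq_if_same_pattern:
  assumes len: "length s = length u" and i: "i < length s"
    and pat: "\<And>i j. i < length s \<Longrightarrow> j < length s \<Longrightarrow> (s ! i = s ! j) = (u ! i = u ! j)"
  shows "first_occ u i = first_occ s i"
  unfolding first_occ_def[of u]
proof (rule Least_equality)
  show "u ! first_occ s i = u ! i"
    using pat first_occ_le[OF i] nth_first_occ[OF i] i by auto
next
  fix y assume y: "u ! y = u ! i"
  show "first_occ s i \<le> y"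
  proof (rule ccontr)
    assume "\<not> first_occ s i \<le> y"
    with first_occ_le[OF i] i have "y < first_occ s i" "y < length s" by linarith+
    with nth_less_first_occ pat i y show False by blast
  qed
qed

lemma card_image_nth_eq_if_same_pattern:
  assumes A: "A \<subseteq> {..<length s}"
    and pat: "\<And>i j. i \<in> A \<Longrightarrow> j \<in> A \<Longrightarrow> (s ! i = s ! j) = (u ! i = u ! j)"
  shows "card (nth u ` A) = card (nth s ` A)"
proof -
  define g where "g x = u ! (SOME j. j \<in> A \<and> s ! j = x)" for x
  have g: "g (s ! j) = u ! j" if "j \<in> A" for j
  proof -
    have "(SOME k. k \<in> A \<and> s ! k = s ! j) \<in> A \<and> s ! (SOME k. k \<in> A \<and> s ! k = s ! j) = s ! j"
      by (rule someI[of _ j]) (simp add: that)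
    thus ?thesis unfolding g_def using pat that by blast
  qed
  have "inj_on g (nth s ` A)"
    by (rule inj_onI) (auto simp: g pat)
  moreover have "g ` nth s ` A = nth u ` A"
    by (auto simp: image_image g)
  ultimately show ?thesis
    by (metis card_image)
qed

lemma length_canon [simp]: "length (canon s) = length s"
  unfolding canon_def by simp

lemma nth_canon:
  "i < length s \<Longrightarrow> canon s ! i = Suc (card (nth s ` {..<first_occ s i}))"
proof -
  have "{s ! j | j. j < first_occ s i} = nth s ` {..<first_occ s i}"
    by auto
  thus "i < length s \<Longrightarrow> ?thesis"
    unfolding canon_def by simp
qed

lemma canon_eq_if_same_pattern:
  assumes len: "length s = length u"
    and pat: "\<And>i j. i < length s \<Longrightarrow> j < length s \<Longrightarrow> (s ! i = s ! j) = (u ! i = u ! j)"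
  shows "canon u = canon s"
proof (rule nth_equalityI)
  show "length (canon u) = length (canon s)"
    using len by simp
next
  fix i assume "i < length (canon u)"
  hence i: "i < length s"
    using len by simp
  have sub: "{..<first_occ s i} \<subseteq> {..<length s}"
    using first_occ_le[OF i] i by auto
  hence "card (nth u ` {..<first_occ s i}) = card (nth s ` {..<first_occ s i})"
    by (rule card_image_nth_eq_if_same_pattern) (metis pat sub lessThan_iff subsetD)
  thus "canon u ! i = canon s ! i"
    using nth_canon[of i u] nth_canon[OF i] i len first_occ_eq_if_same_pattern[OF len i pat]
    by simp
qed

lemma card_image_first_occ_less:
  assumes a: "a < length s" and ab: "first_occ s a < first_occ s b"
  shows "card (nth s ` {..<first_occ s a}) < card (nth s ` {..<first_occ s b})"
proof (rule psubset_card_mono)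
  have "s ! a \<in> nth s ` {..<first_occ s b}"
    using ab nth_first_occ[OF a] by (metis image_eqI lessThan_iff)
  thus "nth s ` {..<first_occ s a} \<subset> nth s ` {..<first_occ s b}"
    using ab nth_notin_image_first_occ[of s a] by auto
qed simp

lemma nth_canon_eq_iff:
  assumes i: "i < length s" and j: "j < length s"
  shows "(canon s ! i = canon s ! j) = (s ! i = s ! j)"
proof
  assume "s ! i = s ! j"
  hence "first_occ s i = first_occ s j"
    unfolding first_occ_def by simp
  thus "canon s ! i = canon s ! j"
    using nth_canon[OF i] nth_canon[OF j] by simp
next
  assume eq: "canon s ! i = canon s ! j"
  show "s ! i = s ! j"
  proof (rule ccontr)
    assume "s ! i \<noteq> s ! j"
    hence "first_occ s i < first_occ s j \<or> first_occ s j < first_occ s i"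
      using nth_first_occ[OF i] nth_first_occ[OF j] by (metis linorder_neqE_nat)
    thus False
      using card_image_first_occ_less[OF i] card_image_first_occ_less[OF j]
        eq nth_canon[OF i] nth_canon[OF j] by fastforce
  qed
qed

lemma canon_canon [simp]: "canon (canon s) = canon s"
  by (rule canon_eq_if_same_pattern) (auto simp: nth_canon_eq_iff)

lemma canon_in_Sigma:
  assumes s: "s \<in> Sigma K n"
  shows "canon s \<in> Sigma K n"
proof -
  have "canon s ! i \<in> {1..K}" if i: "i < length s" for i
  proof -
    have "nth s ` {..<first_occ s i} \<subseteq> set s"
      using first_occ_le[OF i] i by auto
    hence "nth s ` {..<first_occ s i} \<subset> set s"
      using i nth_notin_image_first_occ[of s i] by auto
    hence "card (nth s ` {..<first_occ s i}) < card (set s)"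
      by (simp add: psubset_card_mono)
    also have "card (set s) \<le> card {1..K}"
      using s by (intro card_mono) (auto simp: Sigma_def)
    finally show ?thesis
      using nth_canon[OF i] by simp
  qed
  thus ?thesis
    using s by (auto simp: Sigma_def in_set_conv_nth)
qed

lemma finite_Sigma: "finite (Sigma K n)"
proof -
  have "Sigma K n = {xs. set xs \<subseteq> {1..K} \<and> length xs = n}"
    by (auto simp: Sigma_def)
  thus ?thesis
    using finite_lists_length_eq[of "{1..K}" n] by simp
qed

lemma marg_star_eq_sum_canon:
  "marg_star K n P i k = (\<Sum>s\<in>Sigma K n. if canon s ! i = k then P s else 0)"
proof -
  let ?S = "{s\<in>Sigma K n. canon s ! i = k}"
  let ?T = "{s\<in>Sigma K n. canon s = s \<and> s ! i = k}"
  have fin: "finite ?S" "finite ?T"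
    using finite_Sigma by auto
  have "canon ` ?S \<subseteq> ?T"
    using canon_in_Sigma by auto
  hence "(\<Sum>t\<in>?T. \<Sum>s\<in>{s\<in>?S. canon s = t}. P s) = (\<Sum>s\<in>?S. P s)"
    by (rule sum.group[OF fin])
  moreover have "marg_star K n P i k = (\<Sum>t\<in>?T. \<Sum>s\<in>{s\<in>?S. canon s = t}. P s)"
    unfolding marg_star_def post_star_def by (auto intro!: sum.cong)
  ultimately show ?thesis
    using finite_Sigma by (simp add: sum.inter_filter)
qed

lemma hamming_eq_sum:
  "length t = n \<Longrightarrow> real (hamming t u) = (\<Sum>i<n. if t ! i = u ! i then 0 else 1)"
proof -
  assume "length t = n"
  hence "{i. i < length t \<and> t ! i \<noteq> u ! i} = {..<n} \<inter> - {i. t ! i = u ! i}"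
    by auto
  thus ?thesis
    unfolding hamming_def by (simp add: sum.If_cases)
qed

lemma exp_loss_eq_sum_marg_star:
  assumes "length t = n"
  shows "exp_loss K n P t = (\<Sum>i<n. (\<Sum>s\<in>Sigma K n. P s) - marg_star K n P i (t ! i))"
proof -
  have "exp_loss K n P t
      = (\<Sum>s\<in>Sigma K n. \<Sum>i<n. P s - (if canon s ! i = t ! i then P s else 0))"
    unfolding exp_loss_def hamming_eq_sum[OF assms]
    by (auto simp: sum_distrib_left intro!: sum.cong)
  also have "\<dots> = (\<Sum>i<n. \<Sum>s\<in>Sigma K n. P s - (if canon s ! i = t ! i then P s else 0))"
    by (rule sum.swap)
  finally show ?thesis
    by (simp add: sum_subtractf marg_star_eq_sum_canon eq_commute)
qed

lemma exp_loss_minimal_if_marg_star_maximal: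
  assumes len: "length t\<^sub>0 = n"
    and max: "\<And>i k. i < n \<Longrightarrow> k \<in> {1..K} \<Longrightarrow> marg_star K n P i k \<le> marg_star K n P i (t\<^sub>0 ! i)"
    and t: "t \<in> Sigma K n"
  shows "exp_loss K n P t\<^sub>0 \<le> exp_loss K n P t"
proof -
  have t_len: "length t = n" and t_range: "\<And>i. i < n \<Longrightarrow> t ! i \<in> {1..K}"
    using t by (auto simp: Sigma_def dest!: nth_mem)
  show ?thesis
    unfolding exp_loss_eq_sum_marg_star[OF len] exp_loss_eq_sum_marg_star[OF t_len]
    by (intro sum_mono) (simp add: max[OF _ t_range])
qed

theorem theorem2:
  fixes K n :: nat and P :: "nat list \<Rightarrow> real" and s_hat :: "nat list"
  assumes K: "K \<ge> 2" and n: "n \<ge> 1"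
    and P_nonneg: "\<And>s. s \<in> Sigma K n \<Longrightarrow> P s \<ge> 0"
    and P_sum: "(\<Sum>s\<in>Sigma K n. P s) = 1"
    and P_inv: "\<And>\<phi> s. \<phi> permutes {1..K} \<Longrightarrow> s \<in> Sigma K n \<Longrightarrow> P (map \<phi> s) = P s"
    and s_hat_len: "length s_hat = n"
    and s_hat_range: "\<And>i. i < n \<Longrightarrow> s_hat ! i \<in> {1..K}"
    and s_hat_max: "\<And>i k. i < n \<Longrightarrow> k \<in> {1..K} \<Longrightarrow>
                       marg_star K n P i k \<le> marg_star K n P i (s_hat ! i)"
  shows "(\<forall>t\<in>Sigma K n. exp_loss K n P s_hat \<le> exp_loss K n P t)
       \<and> canon s_hat \<in> canon ` {t\<in>Sigma K n. \<forall>t'\<in>Sigma K n. exp_loss K n P t \<le> exp_loss K n P t'}"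
proof -
  have opt: "\<forall>t\<in>Sigma K n. exp_loss K n P s_hat \<le> exp_loss K n P t"
    using exp_loss_minimal_if_marg_star_maximal[OF s_hat_len s_hat_max] by blast
  have "s_hat \<in> Sigma K n"
    using s_hat_len s_hat_range by (auto simp: Sigma_def in_set_conv_nth)
  with opt show ?thesis
    by blast
qed

end
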